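(* Let $(\Re,S,V)$ be a vector $S$-metric space and let $H,K,P,Q:\Re\to\Re$ be four maps such that there is $\rho\in[0,1)$ with $$S(Hx,Hy,Kz)\preceq \rho\, U(x,y,z)\quad\text{for all } x,y,z\in\Re,$$ where $$U(x,y,z)=\max\{S(Px,Py,Qz),\ S(Px,Px,Hx),\ S(Qz,Qz,Kz),\ S(Qz,Qz,Hx)\}$$ (the maximum being the supremum in $V$), and suppose the pairs $(H,P)$ and $(K,Q)$ are occasionally weakly compatible. Then $H,K,P,Q$ have a unique common fixed point in $\Re$, i.e. there is exactly one $\xi\in\Re$ with $H\xi=K\xi=P\xi=Q\xi=\xi$.
   Context: A vector lattice (Riesz space) $V$ is an ordered real vector space whose order $\preceq$ is a lattice order; $\max$ of finitely many elements of $V$ denotes their supremum. Given a vector lattice $V$ and a nonempty set $\Re$, a vector $S$-metric is a map $S:\Re^3\to V$ such that for all $x_1,x_2,x_3,\alpha\in\Re$: (a) $S(x_1,x_2,x_3)\succeq 0$; (b) $S(x_1,x_2,x_3)=0$ iff $x_1=x_2=x_3$; (c) $S(x_1,x_2,x_3)\preceq S(x_1,x_2,\alpha)+S(x_2,x_2,\alpha)+S(x_3,x_3,\alpha)$. The triple $(\Re,S,V)$ is a vector $S$-metric space. Two maps $A,B:\Re\to\Re$ are occasionally weakly compatible if there exists a coincidence point $x\in\Re$ of $A$ and $B$ (i.e. $Ax=Bx$) such that $ABx=BAx$. *)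

theory Defs
  imports "HOL-Analysis.Analysis"
begin

class vector_lattice = ordered_real_vector + lattice

definition vector_S_metric :: "'a set \<Rightarrow> ('a \<Rightarrow> 'a \<Rightarrow> 'a \<Rightarrow> 'v::vector_lattice) \<Rightarrow> bool" where
  "vector_S_metric R S \<longleftrightarrow> R \<noteq> {} \<and>
     (\<forall>x1\<in>R. \<forall>x2\<in>R. \<forall>x3\<in>R.
        0 \<le> S x1 x2 x3 \<and>
        (S x1 x2 x3 = 0 \<longleftrightarrow> x1 = x2 \<and> x2 = x3) \<and>
        (\<forall>a\<in>R. S x1 x2 x3 \<le> S x1 x2 a + S x2 x2 a + S x3 x3 a))"

definition owc :: "'a set \<Rightarrow> ('a \<Rightarrow> 'a) \<Rightarrow> ('a \<Rightarrow> 'a) \<Rightarrow> bool" where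
  "owc R A B \<longleftrightarrow> (\<exists>x\<in>R. A x = B x \<and> A (B x) = B (A x))"

end

theory Submission
  imports Defs
begin

text \<open>
  If \<open>Px = Hx\<close> and \<open>Qz = Kz\<close>, the contractive condition at \<open>(x, x, z)\<close> collapses to
  \<open>S(Hx, Hx, Kz) \<preceq> \<rho> S(Hx, Hx, Kz)\<close>: two entries of the maximum vanish and the other two
  agree by the symmetry \<open>S(a, a, b) = S(b, b, a)\<close>. Hence \<open>H\<close> and \<open>K\<close> take the same value at
  every coincidence point of \<open>(H, P)\<close> and of \<open>(K, Q)\<close>. Weak compatibility makes this common
  value \<open>w\<close> again a coincidence point of both pairs, and comparing \<open>w\<close> with the original
  coincidence points gives \<open>Hw = Kw = w\<close>. A second common fixed point is a coincidence point
  of both pairs as well, so it equals \<open>w\<close>.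
\<close>

lemma scaleR_le_self_imp_zero:
  fixes u :: "'v::ordered_real_vector"
  assumes "0 \<le> u" and "\<rho> < 1" and "u \<le> \<rho> *\<^sub>R u"
  shows "u = 0"
proof -
  have "(1 - \<rho>) *\<^sub>R u \<le> 0"
    using assms(3) by (simp add: algebra_simps)
  then have "inverse (1 - \<rho>) *\<^sub>R ((1 - \<rho>) *\<^sub>R u) \<le> inverse (1 - \<rho>) *\<^sub>R 0"
    using assms(2) by (intro scaleR_left_mono) simp_all
  then have "u \<le> 0"
    using assms(2) by simp
  then show ?thesis
    using assms(1) by (rule antisym)
qed

lemma vector_S_metric_nonneg:
  "vector_S_metric R S \<Longrightarrow> x \<in> R \<Longrightarrow> y \<in> R \<Longrightarrow> z \<in> R \<Longrightarrow> 0 \<le> S x y z"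
  unfolding vector_S_metric_def by blast

lemma vector_S_metric_eq_0_iff:
  "vector_S_metric R S \<Longrightarrow> x \<in> R \<Longrightarrow> y \<in> R \<Longrightarrow> z \<in> R \<Longrightarrow> S x y z = 0 \<longleftrightarrow> x = y \<and> y = z"
  unfolding vector_S_metric_def by blast

lemma vector_S_metric_triangle:
  "vector_S_metric R S \<Longrightarrow> x \<in> R \<Longrightarrow> y \<in> R \<Longrightarrow> z \<in> R \<Longrightarrow> a \<in> R \<Longrightarrow>
    S x y z \<le> S x y a + S y y a + S z z a"
  unfolding vector_S_metric_def by blast

lemma vector_S_metric_sym:
  assumes "vector_S_metric R S" and "x \<in> R" and "y \<in> R"
  shows "S x x y = S y y x"
proof -
  have le: "S a a b \<le> S b b a" if "a \<in> R" "b \<in> R" for a b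
  proof -
    have "S a a b \<le> S a a a + S a a a + S b b a"
      using vector_S_metric_triangle[OF assms(1)] that by blast
    then show ?thesis
      using vector_S_metric_eq_0_iff[OF assms(1) that(1) that(1) that(1)] by simp
  qed
  show ?thesis
    using le[OF assms(2,3)] le[OF assms(3,2)] by (rule antisym)
qed

lemma coincidence_values_eq:
  fixes S :: "'a \<Rightarrow> 'a \<Rightarrow> 'a \<Rightarrow> 'v::vector_lattice"
  assumes S: "vector_S_metric R S"
    and "\<forall>x\<in>R. H x \<in> R" and "\<forall>x\<in>R. K x \<in> R" and "\<rho> < 1"
    and contr: "\<forall>x\<in>R. \<forall>y\<in>R. \<forall>z\<in>R.
           S (H x) (H y) (K z) \<le> \<rho> *\<^sub>R
             sup (sup (S (P x) (P y) (Q z)) (S (P x) (P x) (H x)))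
                 (sup (S (Q z) (Q z) (K z)) (S (Q z) (Q z) (H x)))"
    and "x \<in> R" and "z \<in> R" and "P x = H x" and "Q z = K z"
  shows "H x = K z"
proof -
  have a: "H x \<in> R" and b: "K z \<in> R"
    using assms(2,3,6,7) by auto
  have "S (H x) (H x) (K z) \<le> \<rho> *\<^sub>R
          sup (sup (S (P x) (P x) (Q z)) (S (P x) (P x) (H x)))
              (sup (S (Q z) (Q z) (K z)) (S (Q z) (Q z) (H x)))"
    using contr \<open>x \<in> R\<close> \<open>z \<in> R\<close> by blast
  also have "\<dots> = \<rho> *\<^sub>R
          sup (sup (S (H x) (H x) (K z)) (S (H x) (H x) (H x)))
              (sup (S (K z) (K z) (K z)) (S (K z) (K z) (H x)))"
    using \<open>P x = H x\<close> \<open>Q z = K z\<close> by simp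
  also have "\<dots> = \<rho> *\<^sub>R S (H x) (H x) (K z)"
    using vector_S_metric_eq_0_iff[OF S a a a] vector_S_metric_eq_0_iff[OF S b b b]
      vector_S_metric_nonneg[OF S a a b] vector_S_metric_sym[OF S b a]
    by (simp add: sup_absorb1 sup_absorb2)
  finally have "S (H x) (H x) (K z) = 0"
    by (rule scaleR_le_self_imp_zero[OF vector_S_metric_nonneg[OF S a a b] \<open>\<rho> < 1\<close>])
  then show ?thesis
    using vector_S_metric_eq_0_iff[OF S a a b] by simp
qed

theorem theorem2p3:
  fixes R :: "'a set" and S :: "'a \<Rightarrow> 'a \<Rightarrow> 'a \<Rightarrow> 'v::vector_lattice"
    and H K P Q :: "'a \<Rightarrow> 'a" and \<rho> :: real
  assumes "vector_S_metric R S"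
    and "\<forall>x\<in>R. H x \<in> R" and "\<forall>x\<in>R. K x \<in> R" and "\<forall>x\<in>R. P x \<in> R" and "\<forall>x\<in>R. Q x \<in> R"
    and "0 \<le> \<rho>" and "\<rho> < 1"
    and "\<forall>x\<in>R. \<forall>y\<in>R. \<forall>z\<in>R.
           S (H x) (H y) (K z) \<le> \<rho> *\<^sub>R
             sup (sup (S (P x) (P y) (Q z)) (S (P x) (P x) (H x)))
                 (sup (S (Q z) (Q z) (K z)) (S (Q z) (Q z) (H x)))"
    and "owc R H P" and "owc R K Q"
  shows "\<exists>!\<xi>. \<xi> \<in> R \<and> H \<xi> = \<xi> \<and> K \<xi> = \<xi> \<and> P \<xi> = \<xi> \<and> Q \<xi> = \<xi>"
proof -
  note same_value = coincidence_values_eq[OF assms(1-3,7,8)]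
  obtain x where x: "x \<in> R" "H x = P x" "H (P x) = P (H x)"
    using \<open>owc R H P\<close> unfolding owc_def by blast
  obtain y where y: "y \<in> R" "K y = Q y" "K (Q y) = Q (K y)"
    using \<open>owc R K Q\<close> unfolding owc_def by blast
  define w where "w = H x"
  have "w \<in> R"
    using x(1) assms(2) unfolding w_def by blast
  have Ky: "K y = w"
    unfolding w_def by (rule same_value[OF x(1) y(1) x(2)[symmetric] y(2)[symmetric], symmetric])
  have Pw: "P w = H w"
    unfolding w_def by (metis x(2,3))
  have Qw: "Q w = K w"
    unfolding Ky[symmetric] by (metis y(2,3))
  have "H w = K y"
    by (rule same_value[OF \<open>w \<in> R\<close> y(1) Pw y(2)[symmetric]])
  with Ky have Hw: "H w = w"
    by simp
  have "w = H x"
    by (fact w_def)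
  also have "\<dots> = K w"
    by (rule same_value[OF x(1) \<open>w \<in> R\<close> x(2)[symmetric] Qw])
  finally have Kw: "K w = w"
    by (rule sym)
  show ?thesis
  proof (rule ex1I[of _ w])
    show "w \<in> R \<and> H w = w \<and> K w = w \<and> P w = w \<and> Q w = w"
      using \<open>w \<in> R\<close> Hw Kw Pw Qw by simp
  next
    fix z
    assume z: "z \<in> R \<and> H z = z \<and> K z = z \<and> P z = z \<and> Q z = z"
    then have "H w = K z"
      by (intro same_value[OF \<open>w \<in> R\<close> _ Pw]) simp_all
    with z Hw show "z = w"
      by simp
  qed
qed

end
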